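(* For $a,b\in\mathbb{C}$ let $X_{a,b}\subset\mathbb{P}^1_x\times\mathbb{P}^1_y\times\mathbb{P}^1_z$ be the surface defined by \[F=Q_a(x_0,x_1,y_0,y_1)z_0^2+(x_0^2y_0^2+x_1^2y_1^2)z_0z_1+Q_b(x_0,x_1,y_0,y_1)z_1^2,\] where $Q_c=x_0^2y_1^2+c\,x_0x_1y_0y_1+x_1^2y_0^2$. Then $X_{a,b}$ is smooth if and only if \[(a^2-4)(b^2-4)(ab-2b-2a+3)(ab+2b+2a+3)(b^2-2ab+a^2+4)\neq0.\]
   Context: $(x_0:x_1),(y_0:y_1),(z_0:z_1)$ are homogeneous coordinates on $\mathbb{P}^1_x,\mathbb{P}^1_y,\mathbb{P}^1_z$. *)

theory Defs
  imports "HOL-Analysis.Analysis"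
begin

definition Qf :: "complex \<Rightarrow> complex \<Rightarrow> complex \<Rightarrow> complex \<Rightarrow> complex \<Rightarrow> complex" where
  "Qf c x0 x1 y0 y1 = x0^2 * y1^2 + c * x0 * x1 * y0 * y1 + x1^2 * y0^2"

definition Fab :: "complex \<Rightarrow> complex \<Rightarrow> complex \<Rightarrow> complex \<Rightarrow> complex \<Rightarrow> complex \<Rightarrow> complex \<Rightarrow> complex \<Rightarrow> complex" where
  "Fab a b x0 x1 y0 y1 z0 z1 =
     Qf a x0 x1 y0 y1 * z0^2 + (x0^2 * y0^2 + x1^2 * y1^2) * z0 * z1 + Qf b x0 x1 y0 y1 * z1^2"

text \<open>A point ((x0:x1),(y0:y1),(z0:z1)) of P^1 x P^1 x P^1 is a singular point of X_{a,b}
  if F vanishes there together with all its partial derivatives (Jacobian criterion).\<close>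
definition singular_point :: "complex \<Rightarrow> complex \<Rightarrow> complex \<Rightarrow> complex \<Rightarrow> complex \<Rightarrow> complex \<Rightarrow> complex \<Rightarrow> complex \<Rightarrow> bool" where
  "singular_point a b x0 x1 y0 y1 z0 z1 \<longleftrightarrow>
     (x0, x1) \<noteq> (0, 0) \<and> (y0, y1) \<noteq> (0, 0) \<and> (z0, z1) \<noteq> (0, 0) \<and>
     Fab a b x0 x1 y0 y1 z0 z1 = 0 \<and>
     deriv (\<lambda>t. Fab a b t x1 y0 y1 z0 z1) x0 = 0 \<and>
     deriv (\<lambda>t. Fab a b x0 t y0 y1 z0 z1) x1 = 0 \<and>
     deriv (\<lambda>t. Fab a b x0 x1 t y1 z0 z1) y0 = 0 \<and>
     deriv (\<lambda>t. Fab a b x0 x1 y0 t z0 z1) y1 = 0 \<and>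
     deriv (\<lambda>t. Fab a b x0 x1 y0 y1 t z1) z0 = 0 \<and>
     deriv (\<lambda>t. Fab a b x0 x1 y0 y1 z0 t) z1 = 0"

definition smooth_Xab :: "complex \<Rightarrow> complex \<Rightarrow> bool" where
  "smooth_Xab a b \<longleftrightarrow> \<not> (\<exists>x0 x1 y0 y1 z0 z1. singular_point a b x0 x1 y0 y1 z0 z1)"

end

theory Submission
  imports Defs
begin

(* Singular points are located by a case split on (z0:z1). On z0 = 0 the equations
   dF/dx0 = dF/dx1 = 0 form a linear system in x0 y1, x1 y0 with determinant 4 - b^2, and
   z1 = 0 is the same case after exchanging (z0, a) with (z1, b). Otherwise no coordinate
   vanishes, and in the affine chart x0 = y0 = z0 = 1 the partials in x1 and y1 combine to
   (x^2 - y^2)(1 + z^2) = 0: the case z^2 = -1 yields the last factor, y = x and y = -x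
   the two bilinear ones. Conversely, each vanishing factor produces an explicit singular
   point, up to the symmetries (a, b, z0, z1) -> (b, a, z1, z0) and (a, b, x1) -> (-a, -b, -x1). *)

definition dFab_dx0 :: "complex \<Rightarrow> complex \<Rightarrow> complex \<Rightarrow> complex \<Rightarrow> complex \<Rightarrow> complex \<Rightarrow> complex \<Rightarrow> complex \<Rightarrow> complex" where
  "dFab_dx0 a b x0 x1 y0 y1 z0 z1 =
     (2*x0*y1^2 + a*x1*y0*y1) * z0^2 + 2*x0*y0^2 * z0*z1 + (2*x0*y1^2 + b*x1*y0*y1) * z1^2"

definition dFab_dx1 :: "complex \<Rightarrow> complex \<Rightarrow> complex \<Rightarrow> complex \<Rightarrow> complex \<Rightarrow> complex \<Rightarrow> complex \<Rightarrow> complex \<Rightarrow> complex" where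
  "dFab_dx1 a b x0 x1 y0 y1 z0 z1 =
     (a*x0*y0*y1 + 2*x1*y0^2) * z0^2 + 2*x1*y1^2 * z0*z1 + (b*x0*y0*y1 + 2*x1*y0^2) * z1^2"

definition dFab_dy0 :: "complex \<Rightarrow> complex \<Rightarrow> complex \<Rightarrow> complex \<Rightarrow> complex \<Rightarrow> complex \<Rightarrow> complex \<Rightarrow> complex \<Rightarrow> complex" where
  "dFab_dy0 a b x0 x1 y0 y1 z0 z1 =
     (a*x0*x1*y1 + 2*x1^2*y0) * z0^2 + 2*x0^2*y0 * z0*z1 + (b*x0*x1*y1 + 2*x1^2*y0) * z1^2"

definition dFab_dy1 :: "complex \<Rightarrow> complex \<Rightarrow> complex \<Rightarrow> complex \<Rightarrow> complex \<Rightarrow> complex \<Rightarrow> complex \<Rightarrow> complex \<Rightarrow> complex" where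
  "dFab_dy1 a b x0 x1 y0 y1 z0 z1 =
     (2*x0^2*y1 + a*x0*x1*y0) * z0^2 + 2*x1^2*y1 * z0*z1 + (2*x0^2*y1 + b*x0*x1*y0) * z1^2"

definition dFab_dz0 :: "complex \<Rightarrow> complex \<Rightarrow> complex \<Rightarrow> complex \<Rightarrow> complex \<Rightarrow> complex \<Rightarrow> complex \<Rightarrow> complex \<Rightarrow> complex" where
  "dFab_dz0 a b x0 x1 y0 y1 z0 z1 = 2 * Qf a x0 x1 y0 y1 * z0 + (x0^2*y0^2 + x1^2*y1^2) * z1"

definition dFab_dz1 :: "complex \<Rightarrow> complex \<Rightarrow> complex \<Rightarrow> complex \<Rightarrow> complex \<Rightarrow> complex \<Rightarrow> complex \<Rightarrow> complex \<Rightarrow> complex" where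
  "dFab_dz1 a b x0 x1 y0 y1 z0 z1 = (x0^2*y0^2 + x1^2*y1^2) * z0 + 2 * Qf b x0 x1 y0 y1 * z1"

lemmas dFab_defs = dFab_dx0_def dFab_dx1_def dFab_dy0_def dFab_dy1_def dFab_dz0_def dFab_dz1_def

lemma deriv_Fab:
  "deriv (\<lambda>t. Fab a b t x1 y0 y1 z0 z1) x0 = dFab_dx0 a b x0 x1 y0 y1 z0 z1"
  "deriv (\<lambda>t. Fab a b x0 t y0 y1 z0 z1) x1 = dFab_dx1 a b x0 x1 y0 y1 z0 z1"
  "deriv (\<lambda>t. Fab a b x0 x1 t y1 z0 z1) y0 = dFab_dy0 a b x0 x1 y0 y1 z0 z1"
  "deriv (\<lambda>t. Fab a b x0 x1 y0 t z0 z1) y1 = dFab_dy1 a b x0 x1 y0 y1 z0 z1"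
  "deriv (\<lambda>t. Fab a b x0 x1 y0 y1 t z1) z0 = dFab_dz0 a b x0 x1 y0 y1 z0 z1"
  "deriv (\<lambda>t. Fab a b x0 x1 y0 y1 z0 t) z1 = dFab_dz1 a b x0 x1 y0 y1 z0 z1"
  by (rule DERIV_imp_deriv; unfold Fab_def Qf_def dFab_defs;
      (rule derivative_eq_intros refl)+; simp add: algebra_simps power2_eq_square)+

lemma singular_point_iff:
  "singular_point a b x0 x1 y0 y1 z0 z1 \<longleftrightarrow>
     (x0, x1) \<noteq> (0, 0) \<and> (y0, y1) \<noteq> (0, 0) \<and> (z0, z1) \<noteq> (0, 0) \<and>
     Fab a b x0 x1 y0 y1 z0 z1 = 0 \<and>
     dFab_dx0 a b x0 x1 y0 y1 z0 z1 = 0 \<and> dFab_dx1 a b x0 x1 y0 y1 z0 z1 = 0 \<and>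
     dFab_dy0 a b x0 x1 y0 y1 z0 z1 = 0 \<and> dFab_dy1 a b x0 x1 y0 y1 z0 z1 = 0 \<and>
     dFab_dz0 a b x0 x1 y0 y1 z0 z1 = 0 \<and> dFab_dz1 a b x0 x1 y0 y1 z0 z1 = 0"
  unfolding singular_point_def deriv_Fab ..

lemma singular_point_swap_z:
  "singular_point b a x0 x1 y0 y1 z1 z0 \<longleftrightarrow> singular_point a b x0 x1 y0 y1 z0 z1"
proof -
  have "Fab b a x0 x1 y0 y1 z1 z0 = Fab a b x0 x1 y0 y1 z0 z1"
    "dFab_dz0 b a x0 x1 y0 y1 z1 z0 = dFab_dz1 a b x0 x1 y0 y1 z0 z1"
    "dFab_dz1 b a x0 x1 y0 y1 z1 z0 = dFab_dz0 a b x0 x1 y0 y1 z0 z1"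
    "dFab_dx0 b a x0 x1 y0 y1 z1 z0 = dFab_dx0 a b x0 x1 y0 y1 z0 z1"
    "dFab_dx1 b a x0 x1 y0 y1 z1 z0 = dFab_dx1 a b x0 x1 y0 y1 z0 z1"
    "dFab_dy0 b a x0 x1 y0 y1 z1 z0 = dFab_dy0 a b x0 x1 y0 y1 z0 z1"
    "dFab_dy1 b a x0 x1 y0 y1 z1 z0 = dFab_dy1 a b x0 x1 y0 y1 z0 z1"
    by (simp_all add: Fab_def dFab_defs algebra_simps)
  then show ?thesis
    unfolding singular_point_iff by auto
qed

lemma singular_point_neg:
  "singular_point (-a) (-b) x0 (-x1) y0 y1 z0 z1 \<longleftrightarrow> singular_point a b x0 x1 y0 y1 z0 z1"
proof -
  have "Fab (-a) (-b) x0 (-x1) y0 y1 z0 z1 = Fab a b x0 x1 y0 y1 z0 z1"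
    "dFab_dx0 (-a) (-b) x0 (-x1) y0 y1 z0 z1 = dFab_dx0 a b x0 x1 y0 y1 z0 z1"
    "dFab_dx1 (-a) (-b) x0 (-x1) y0 y1 z0 z1 = - dFab_dx1 a b x0 x1 y0 y1 z0 z1"
    "dFab_dy0 (-a) (-b) x0 (-x1) y0 y1 z0 z1 = dFab_dy0 a b x0 x1 y0 y1 z0 z1"
    "dFab_dy1 (-a) (-b) x0 (-x1) y0 y1 z0 z1 = dFab_dy1 a b x0 x1 y0 y1 z0 z1"
    "dFab_dz0 (-a) (-b) x0 (-x1) y0 y1 z0 z1 = dFab_dz0 a b x0 x1 y0 y1 z0 z1"
    "dFab_dz1 (-a) (-b) x0 (-x1) y0 y1 z0 z1 = dFab_dz1 a b x0 x1 y0 y1 z0 z1"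
    by (simp_all add: Fab_def Qf_def dFab_defs algebra_simps)
  then show ?thesis
    unfolding singular_point_iff by auto
qed

lemma singular_point_scale:
  assumes "l \<noteq> 0" "m \<noteq> 0" "n \<noteq> 0"
  shows "singular_point a b (l*x0) (l*x1) (m*y0) (m*y1) (n*z0) (n*z1) \<longleftrightarrow>
    singular_point a b x0 x1 y0 y1 z0 z1"
proof -
  have "Fab a b (l*x0) (l*x1) (m*y0) (m*y1) (n*z0) (n*z1) = l^2*m^2*n^2 * Fab a b x0 x1 y0 y1 z0 z1"
    "dFab_dx0 a b (l*x0) (l*x1) (m*y0) (m*y1) (n*z0) (n*z1) = l*m^2*n^2 * dFab_dx0 a b x0 x1 y0 y1 z0 z1"
    "dFab_dx1 a b (l*x0) (l*x1) (m*y0) (m*y1) (n*z0) (n*z1) = l*m^2*n^2 * dFab_dx1 a b x0 x1 y0 y1 z0 z1"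
    "dFab_dy0 a b (l*x0) (l*x1) (m*y0) (m*y1) (n*z0) (n*z1) = l^2*m*n^2 * dFab_dy0 a b x0 x1 y0 y1 z0 z1"
    "dFab_dy1 a b (l*x0) (l*x1) (m*y0) (m*y1) (n*z0) (n*z1) = l^2*m*n^2 * dFab_dy1 a b x0 x1 y0 y1 z0 z1"
    "dFab_dz0 a b (l*x0) (l*x1) (m*y0) (m*y1) (n*z0) (n*z1) = l^2*m^2*n * dFab_dz0 a b x0 x1 y0 y1 z0 z1"
    "dFab_dz1 a b (l*x0) (l*x1) (m*y0) (m*y1) (n*z0) (n*z1) = l^2*m^2*n * dFab_dz1 a b x0 x1 y0 y1 z0 z1"
    by (simp_all add: Fab_def Qf_def dFab_defs algebra_simps power2_eq_square)
  with assms show ?thesis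
    unfolding singular_point_iff by auto
qed

definition Xab_discriminant :: "complex \<Rightarrow> complex \<Rightarrow> complex" where
  "Xab_discriminant a b =
    (a^2 - 4) * (b^2 - 4) * (a*b - 2*b - 2*a + 3) * (a*b + 2*b + 2*a + 3) * (b^2 - 2*a*b + a^2 + 4)"

lemma Xab_discriminant_eq_0_iff:
  "Xab_discriminant a b = 0 \<longleftrightarrow>
    a^2 = 4 \<or> b^2 = 4 \<or> a*b - 2*b - 2*a + 3 = 0 \<or> a*b + 2*b + 2*a + 3 = 0 \<or> b^2 - 2*a*b + a^2 + 4 = 0"
  by (simp add: Xab_discriminant_def)

lemma singular_point_z0_eq_0:
  assumes "singular_point a b x0 x1 y0 y1 0 z1"
  shows "b^2 = 4"
proof (rule ccontr)
  assume "b^2 \<noteq> 4"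
  from assms have "z1 \<noteq> 0" and nx: "(x0, x1) \<noteq> (0, 0)" and ny: "(y0, y1) \<noteq> (0, 0)"
    and Fx0: "dFab_dx0 a b x0 x1 y0 y1 0 z1 = 0" and Fx1: "dFab_dx1 a b x0 x1 y0 y1 0 z1 = 0"
    and Fz0: "dFab_dz0 a b x0 x1 y0 y1 0 z1 = 0"
    by (simp_all add: singular_point_iff)
  have "z1^2 * (y1 * (2*x0*y1 + b*x1*y0)) = 0"
    using Fx0 by (simp add: dFab_defs power2_eq_square algebra_simps)
  moreover have "z1^2 * (y0 * (b*x0*y1 + 2*x1*y0)) = 0"
    using Fx1 by (simp add: dFab_defs power2_eq_square algebra_simps)
  moreover have "z1 * (x0^2*y0^2 + x1^2*y1^2) = 0"
    using Fz0 by (simp add: dFab_defs power2_eq_square algebra_simps)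
  ultimately have dx0: "y1 * (2*x0*y1 + b*x1*y0) = 0" and dx1: "y0 * (b*x0*y1 + 2*x1*y0) = 0"
    and dz0: "x0^2*y0^2 + x1^2*y1^2 = 0"
    using \<open>z1 \<noteq> 0\<close> by simp_all
  consider "y0 = 0" | "y1 = 0" | "y0 \<noteq> 0" "y1 \<noteq> 0" by blast
  then show False
  proof cases
    case 1
    with nx ny dx0 dz0 show False by auto
  next
    case 2
    with nx ny dx1 dz0 show False by auto
  next
    case 3
    with dx0 dx1 have "2*x0*y1 + b*x1*y0 = 0" "b*x0*y1 + 2*x1*y0 = 0" by auto
    then have "(4 - b^2) * (x0*y1) = 0" "(4 - b^2) * (x1*y0) = 0" by algebra+
    with \<open>b^2 \<noteq> 4\<close> 3 nx show False by auto
  qed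
qed

lemma singular_point_coords_nonzero:
  assumes "singular_point a b x0 x1 y0 y1 z0 z1" "z0 \<noteq> 0" "z1 \<noteq> 0"
  shows "x0 \<noteq> 0" "x1 \<noteq> 0" "y0 \<noteq> 0" "y1 \<noteq> 0"
proof -
  from assms(1) have nx: "(x0, x1) \<noteq> (0, 0)" and ny: "(y0, y1) \<noteq> (0, 0)"
    and dx0: "dFab_dx0 a b x0 x1 y0 y1 z0 z1 = 0" and dx1: "dFab_dx1 a b x0 x1 y0 y1 z0 z1 = 0"
    and dy0: "dFab_dy0 a b x0 x1 y0 y1 z0 z1 = 0" and dy1: "dFab_dy1 a b x0 x1 y0 y1 z0 z1 = 0"
    and dz0: "dFab_dz0 a b x0 x1 y0 y1 z0 z1 = 0"
    by (simp_all add: singular_point_iff)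
  note z = \<open>z0 \<noteq> 0\<close> \<open>z1 \<noteq> 0\<close>
  show "x0 \<noteq> 0"
  proof
    assume "x0 = 0"
    with nx dy1 z have "y1 = 0" by (simp add: dFab_dy1_def)
    with \<open>x0 = 0\<close> nx ny dz0 z show False by (simp add: dFab_dz0_def Qf_def)
  qed
  show "x1 \<noteq> 0"
  proof
    assume "x1 = 0"
    with nx dy0 z have "y0 = 0" by (simp add: dFab_dy0_def)
    with \<open>x1 = 0\<close> nx ny dz0 z show False by (simp add: dFab_dz0_def Qf_def)
  qed
  show "y0 \<noteq> 0"
  proof
    assume "y0 = 0"
    with ny dx1 z have "x1 = 0" by (simp add: dFab_dx1_def)
    with \<open>y0 = 0\<close> nx ny dz0 z show False by (simp add: dFab_dz0_def Qf_def)
  qed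
  show "y1 \<noteq> 0"
  proof
    assume "y1 = 0"
    with ny dx0 z have "x0 = 0" by (simp add: dFab_dx0_def)
    with \<open>y1 = 0\<close> nx ny dz0 z show False by (simp add: dFab_dz0_def Qf_def)
  qed
qed

lemma affine_singular_point_imp_discriminant_eq_0:
  assumes "singular_point a b 1 x 1 y 1 z" "x \<noteq> 0" "y \<noteq> 0" "z \<noteq> 0"
  shows "Xab_discriminant a b = 0"
proof -
  from assms(1) have f: "(y^2 + a*x*y + x^2) + z*(1 + x^2*y^2) + z^2*(y^2 + b*x*y + x^2) = 0"
    and fx: "a*y + 2*x + 2*x*y^2*z + z^2*(b*y + 2*x) = 0"
    and fy: "2*y + a*x + 2*x^2*y*z + z^2*(2*y + b*x) = 0"
    and fz: "1 + x^2*y^2 + 2*z*(y^2 + b*x*y + x^2) = 0"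
    by (simp_all add: singular_point_iff Fab_def Qf_def dFab_defs algebra_simps)
  have "(x^2 - y^2) * (1 + z^2) = 0" using fx fy by algebra
  then consider "1 + z^2 = 0" | "y = x" | "y = -x"
    by (metis add.inverse_inverse eq_iff_diff_eq_0 mult_eq_0_iff power2_eq_iff)
  then show ?thesis
  proof cases
    case 1
    have "y * ((a-b) + 2*x*y*z) = 0" using fx 1 by algebra
    with \<open>y \<noteq> 0\<close> have "(a-b) + 2*x*y*z = 0" by simp
    with f 1 have "z * (b^2 - 2*a*b + a^2 + 4) = 0" by algebra
    with \<open>z \<noteq> 0\<close> show ?thesis by (simp add: Xab_discriminant_eq_0_iff)
  next
    case 2
    have "x * ((2+a) + 2*x^2*z + (2+b)*z^2) = 0" using fx 2 by algebra
    with \<open>x \<noteq> 0\<close> have g: "(2+a) + 2*x^2*z + (2+b)*z^2 = 0" by simp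
    with f 2 have "z * (1 - x^4) = 0" by algebra
    with \<open>z \<noteq> 0\<close> have "x^4 = 1" by simp
    with g fz 2 have "a*b + 2*b + 2*a + 3 = 0" by algebra
    then show ?thesis by (simp add: Xab_discriminant_eq_0_iff)
  next
    case 3
    have "x * ((2-a) + 2*x^2*z + (2-b)*z^2) = 0" using fx 3 by algebra
    with \<open>x \<noteq> 0\<close> have g: "(2-a) + 2*x^2*z + (2-b)*z^2 = 0" by simp
    with f 3 have "z * (1 - x^4) = 0" by algebra
    with \<open>z \<noteq> 0\<close> have "x^4 = 1" by simp
    with g fz 3 have "a*b - 2*b - 2*a + 3 = 0" by algebra
    then show ?thesis by (simp add: Xab_discriminant_eq_0_iff)
  qed
qed

lemma singular_point_imp_discriminant_eq_0:
  assumes "singular_point a b x0 x1 y0 y1 z0 z1"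
  shows "Xab_discriminant a b = 0"
proof -
  consider "z0 = 0" | "z1 = 0" | "z0 \<noteq> 0" "z1 \<noteq> 0" by blast
  then show ?thesis
  proof cases
    case 1
    with assms singular_point_z0_eq_0 show ?thesis by (auto simp: Xab_discriminant_eq_0_iff)
  next
    case 2
    with assms singular_point_z0_eq_0 have "a^2 = 4" by (metis singular_point_swap_z)
    then show ?thesis by (simp add: Xab_discriminant_eq_0_iff)
  next
    case 3
    note nonzero = singular_point_coords_nonzero[OF assms 3]
    with 3 assms have "singular_point a b 1 (x1/x0) 1 (y1/y0) 1 (z1/z0)"
      using singular_point_scale[of x0 y0 z0 a b 1 "x1/x0" 1 "y1/y0" 1 "z1/z0"] by simp
    moreover from nonzero 3 have "x1/x0 \<noteq> 0" "y1/y0 \<noteq> 0" "z1/z0 \<noteq> 0" by simp_all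
    ultimately show ?thesis by (rule affine_singular_point_imp_discriminant_eq_0)
  qed
qed

lemma smooth_Xab_swap: "smooth_Xab b a \<longleftrightarrow> smooth_Xab a b"
  unfolding smooth_Xab_def by (metis singular_point_swap_z)

lemma smooth_Xab_neg: "smooth_Xab (-a) (-b) \<longleftrightarrow> smooth_Xab a b"
  unfolding smooth_Xab_def by (metis singular_point_neg minus_minus)

lemma not_smooth_Xab_2: "\<not> smooth_Xab 2 b"
proof -
  obtain r :: complex where "r^2 = \<i>" using power2_csqrt by blast
  then have "r^4 = -1" by (metis power2_i power_mult numeral_Bit0 mult_2_right)
  then have "singular_point 2 b 1 r 1 (-r) 1 0"
    by (simp add: singular_point_iff Fab_def Qf_def dFab_defs algebra_simps eval_nat_numeral)
  then show ?thesis unfolding smooth_Xab_def by blast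
qed

lemma not_smooth_Xab_if_a_sq_eq_4:
  assumes "a^2 = 4"
  shows "\<not> smooth_Xab a b"
proof -
  from assms have "(a - 2) * (a + 2) = 0"
    by (simp add: algebra_simps power2_eq_square)
  then have "a = 2 \<or> a = -2"
    by (auto simp: eq_neg_iff_add_eq_0)
  then show ?thesis
    using not_smooth_Xab_2 smooth_Xab_neg by (metis minus_minus)
qed

lemma not_smooth_Xab_if_bilinear_eq_0:
  assumes "a*b + 2*b + 2*a + 3 = 0"
  shows "\<not> smooth_Xab a b"
proof -
  from assms have "singular_point a b 1 1 1 1 (2 + b) (-1)"
    unfolding singular_point_iff Fab_def Qf_def dFab_defs
    by (simp add: algebra_simps power2_eq_square; algebra)
  then show ?thesis unfolding smooth_Xab_def by blast
qed

lemma not_smooth_Xab_if_conic_eq_0: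
  assumes "b^2 - 2*a*b + a^2 + 4 = 0"
  shows "\<not> smooth_Xab a b"
proof -
  \<comment> \<open>In the chart x = x1/x0, y = y1/y0 with z = i, dF/dx1 = 0 forces x y = (a - b) i / 2 and
    dF/dz1 = 0 then fixes x^2 + y^2; P and M are 2 (x + y) and 2 (x - y).\<close>
  obtain P where P: "P^2 = 4*\<i> + 2*(2-b)*(a-b)*\<i>" using power2_csqrt by blast
  obtain M where M: "M^2 = 4*\<i> - 2*(2+b)*(a-b)*\<i>" using power2_csqrt by blast
  have "\<i>^2 = (-1::complex)" by simp
  with assms P M have "singular_point a b 4 (P+M) 4 (P-M) 1 \<i>"
    unfolding singular_point_iff Fab_def Qf_def dFab_defs
    by (simp only: one_power2 mult_1_left mult_1_right; intro conjI; (simp; fail)?; algebra)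
  then show ?thesis unfolding smooth_Xab_def by blast
qed

lemma not_smooth_Xab_if_discriminant_eq_0:
  assumes "Xab_discriminant a b = 0"
  shows "\<not> smooth_Xab a b"
proof -
  from assms consider "a^2 = 4" | "b^2 = 4" | "(-a)*(-b) + 2*(-b) + 2*(-a) + 3 = 0"
    | "a*b + 2*b + 2*a + 3 = 0" | "b^2 - 2*a*b + a^2 + 4 = 0"
    by (auto simp: Xab_discriminant_eq_0_iff)
  then show ?thesis
  proof cases
    case 1
    then show ?thesis by (rule not_smooth_Xab_if_a_sq_eq_4)
  next
    case 2
    then show ?thesis by (metis not_smooth_Xab_if_a_sq_eq_4 smooth_Xab_swap)
  next
    case 3
    then show ?thesis by (metis not_smooth_Xab_if_bilinear_eq_0 smooth_Xab_neg)
  next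
    case 4
    then show ?thesis by (rule not_smooth_Xab_if_bilinear_eq_0)
  next
    case 5
    then show ?thesis by (rule not_smooth_Xab_if_conic_eq_0)
  qed
qed

theorem proposition4p1:
  fixes a b :: complex
  shows "smooth_Xab a b \<longleftrightarrow>
    (a^2 - 4) * (b^2 - 4) * (a*b - 2*b - 2*a + 3) * (a*b + 2*b + 2*a + 3) * (b^2 - 2*a*b + a^2 + 4) \<noteq> 0"
proof -
  have "smooth_Xab a b \<longleftrightarrow> Xab_discriminant a b \<noteq> 0"
    using not_smooth_Xab_if_discriminant_eq_0 singular_point_imp_discriminant_eq_0
    unfolding smooth_Xab_def by blast
  then show ?thesis
    by (simp only: Xab_discriminant_def)
qed

end
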